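(* Let $\mathcal{L}$ be an abstract logic with the weak isomorphism property, let $\tau$ be a vocabulary and let $T \subseteq \mathcal{L}(\tau)$ be a theory. If $T$ has a model $\mathfrak{A}$ of cardinality $\lambda$, then for every cardinal $\kappa > \lambda$ there exist a model $\mathfrak{B}$ of $T$ of cardinality $\kappa$ and a surjective strict homomorphism from $\mathfrak{B}$ onto $\mathfrak{A}$ (and hence a weak isomorphism between $\mathfrak{B}$ and $\mathfrak{A}$).
   Context: Vocabularies may contain relation, function and constant symbols. An abstract logic $\mathcal{L}$ assigns to each vocabulary $\tau$ a set of sentences $\mathcal{L}(\tau)$ and a satisfaction relation between $\tau$-structures and these sentences, satisfying the basic closure properties of abstract logics in the sense of Barwise–Feferman (isomorphism, reduct/expansion, renaming, closure under Boolean connectives, etc.), where the atom property is taken with respect to first-order logic without identity $\mathcal{L}^-_{\omega\omega}$ (i.e. atomic formulas are those not involving $=$); the relativization property is not required. A strict homomorphism from $\mathfrak{B}$ to $\mathfrak{A}$ is a map $h\colon B\to A$ such that for every $n$-ary relation symbol $P$ and $b_1,\dots,b_n\in B$: $P^{\mathfrak{B}}(b_1,\dots,b_n)$ iff $P^{\mathfrak{A}}(h(b_1),\dots,h(b_n))$; for every function symbol $f$: $h(f^{\mathfrak{B}}(b_1,\dots,b_n)) = f^{\mathfrak{A}}(h(b_1),\dots,h(b_n))$; and $h(c^{\mathfrak{B}})=c^{\mathfrak{A}}$ for constants $c$. A weak isomorphism (relativeness correspondence) between $\tau$-structures $\mathfrak{A}$ and $\mathfrak{B}$ is a relation $R\subseteq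 A\times B$ with domain all of $A$ and range all of $B$ such that whenever $a_iRb_i$ for $i=1,\dots,n$: $P^{\mathfrak{A}}(a_1,\dots,a_n)$ iff $P^{\mathfrak{B}}(b_1,\dots,b_n)$ for each $n$-ary relation symbol $P$, $f^{\mathfrak{A}}(a_1,\dots,a_n)\,R\,f^{\mathfrak{B}}(b_1,\dots,b_n)$ for each $n$-ary function symbol $f$, and $c^{\mathfrak{A}} R c^{\mathfrak{B}}$ for each constant $c$. We write $\mathfrak{A}\sim\mathfrak{B}$ if such an $R$ exists. $\mathcal{L}$ has the weak isomorphism property if $\mathfrak{A}\sim\mathfrak{B}$ implies that $\mathfrak{A}$ and $\mathfrak{B}$ satisfy the same $\mathcal{L}$-sentences. *)

theory Defs
  imports Main
begin

record ('r, 'f) vocab =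
  rarity :: "'r \<Rightarrow> nat"
  farity :: "'f \<Rightarrow> nat"

text \<open>A structure with universe elements of type 'u. Only the values on
tuples from the universe of the right length are meaningful.\<close>

record ('u, 'r, 'f, 'c) struc =
  univ :: "'u set"
  rel  :: "'r \<Rightarrow> 'u list \<Rightarrow> bool"
  fn   :: "'f \<Rightarrow> 'u list \<Rightarrow> 'u"
  cn   :: "'c \<Rightarrow> 'u"

definition is_struct :: "('r, 'f) vocab \<Rightarrow> ('u, 'r, 'f, 'c) struc \<Rightarrow> bool" where
  "is_struct \<tau> M \<longleftrightarrow>
     univ M \<noteq> {} \<and>
     (\<forall>f xs. length xs = farity \<tau> f \<and> set xs \<subseteq> univ M \<longrightarrow> fn M f xs \<in> univ M) \<and>
     (\<forall>c. cn M c \<in> univ M)"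

definition strict_hom ::
  "('r, 'f) vocab \<Rightarrow> ('u \<Rightarrow> 'v) \<Rightarrow> ('u, 'r, 'f, 'c) struc \<Rightarrow> ('v, 'r, 'f, 'c) struc \<Rightarrow> bool" where
  "strict_hom \<tau> h B A \<longleftrightarrow>
     (\<forall>x\<in>univ B. h x \<in> univ A) \<and>
     (\<forall>P bs. length bs = rarity \<tau> P \<and> set bs \<subseteq> univ B \<longrightarrow>
              (rel B P bs \<longleftrightarrow> rel A P (map h bs))) \<and>
     (\<forall>f bs. length bs = farity \<tau> f \<and> set bs \<subseteq> univ B \<longrightarrow>
              h (fn B f bs) = fn A f (map h bs)) \<and>
     (\<forall>c. h (cn B c) = cn A c)"

definition weak_iso ::
  "('r, 'f) vocab \<Rightarrow> ('u \<times> 'v) set \<Rightarrow> ('u, 'r, 'f, 'c) struc \<Rightarrow> ('v, 'r, 'f, 'c) struc \<Rightarrow> bool" where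
  "weak_iso \<tau> R A B \<longleftrightarrow>
     R \<subseteq> univ A \<times> univ B \<and> Domain R = univ A \<and> Range R = univ B \<and>
     (\<forall>P as bs. length as = rarity \<tau> P \<and> list_all2 (\<lambda>a b. (a, b) \<in> R) as bs \<longrightarrow>
                (rel A P as \<longleftrightarrow> rel B P bs)) \<and>
     (\<forall>f as bs. length as = farity \<tau> f \<and> list_all2 (\<lambda>a b. (a, b) \<in> R) as bs \<longrightarrow>
                (fn A f as, fn B f bs) \<in> R) \<and>
     (\<forall>c. (cn A c, cn B c) \<in> R)"

definition weakly_iso ::
  "('r, 'f) vocab \<Rightarrow> ('u, 'r, 'f, 'c) struc \<Rightarrow> ('v, 'r, 'f, 'c) struc \<Rightarrow> bool" where
  "weakly_iso \<tau> A B \<longleftrightarrow> (\<exists>R. weak_iso \<tau> R A B)"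

definition isomorphism ::
  "('r, 'f) vocab \<Rightarrow> ('u \<Rightarrow> 'v) \<Rightarrow> ('u, 'r, 'f, 'c) struc \<Rightarrow> ('v, 'r, 'f, 'c) struc \<Rightarrow> bool" where
  "isomorphism \<tau> h A B \<longleftrightarrow> strict_hom \<tau> h A B \<and> bij_betw h (univ A) (univ B)"

text \<open>We record the closure properties that make sense for a single vocabulary:
isomorphism invariance and closure under negation and conjunction.\<close>

definition abstract_logic ::
  "('r, 'f) vocab \<Rightarrow> 's set \<Rightarrow> (('u, 'r, 'f, 'c) struc \<Rightarrow> 's \<Rightarrow> bool) \<Rightarrow> bool" where
  "abstract_logic \<tau> L sat \<longleftrightarrow>
     (\<forall>A B h \<phi>. is_struct \<tau> A \<and> is_struct \<tau> B \<and> isomorphism \<tau> h A B \<and> \<phi> \<in> L \<longrightarrow>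
                 (sat A \<phi> \<longleftrightarrow> sat B \<phi>)) \<and>
     (\<forall>\<phi>\<in>L. \<exists>\<psi>\<in>L. \<forall>A. is_struct \<tau> A \<longrightarrow> (sat A \<psi> \<longleftrightarrow> \<not> sat A \<phi>)) \<and>
     (\<forall>\<phi>\<in>L. \<forall>\<chi>\<in>L. \<exists>\<psi>\<in>L. \<forall>A. is_struct \<tau> A \<longrightarrow> (sat A \<psi> \<longleftrightarrow> sat A \<phi> \<and> sat A \<chi>))"

definition weak_iso_property ::
  "('r, 'f) vocab \<Rightarrow> 's set \<Rightarrow> (('u, 'r, 'f, 'c) struc \<Rightarrow> 's \<Rightarrow> bool) \<Rightarrow> bool" where
  "weak_iso_property \<tau> L sat \<longleftrightarrow>
     (\<forall>A B. is_struct \<tau> A \<and> is_struct \<tau> B \<and> weakly_iso \<tau> A B \<longrightarrow>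
            (\<forall>\<phi>\<in>L. sat A \<phi> \<longleftrightarrow> sat B \<phi>))"

definition is_model ::
  "('r, 'f) vocab \<Rightarrow> (('u, 'r, 'f, 'c) struc \<Rightarrow> 's \<Rightarrow> bool) \<Rightarrow> 's set \<Rightarrow> ('u, 'r, 'f, 'c) struc \<Rightarrow> bool" where
  "is_model \<tau> sat T A \<longleftrightarrow> is_struct \<tau> A \<and> (\<forall>\<phi>\<in>T. sat A \<phi>)"

end

theory Submission
  imports Defs
begin

text \<open>Then \<open>h\<close> is a surjective strict homomorphism, its
graph is a weak isomorphism, and so the pulled-back structure is again a model of \<open>T\<close>.\<close>

definition pullback_struc ::
  "('v \<Rightarrow> 'u) \<Rightarrow> 'v set \<Rightarrow> ('u, 'r, 'f, 'c) struc \<Rightarrow> ('v, 'r, 'f, 'c) struc" where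
  "pullback_struc h K A =
     \<lparr>univ = K,
      rel = (\<lambda>P bs. rel A P (map h bs)),
      fn = (\<lambda>f bs. inv_into K h (fn A f (map h bs))),
      cn = (\<lambda>c. inv_into K h (cn A c))\<rparr>"

lemma univ_pullback_struc [simp]: "univ (pullback_struc h K A) = K"
  by (simp add: pullback_struc_def)

lemma
  assumes "is_struct \<tau> A" and "h ` K = univ A"
  shows is_struct_pullback_struc: "is_struct \<tau> (pullback_struc h K A)"
    and strict_hom_pullback_struc: "strict_hom \<tau> h (pullback_struc h K A) A"
proof -
  have map_in: "set (map h bs) \<subseteq> univ A" if "set bs \<subseteq> K" for bs
    using that assms(2) by auto
  have fn_in: "fn A f (map h bs) \<in> h ` K" if "length bs = farity \<tau> f" "set bs \<subseteq> K" for f bs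
    using assms(1) map_in[OF that(2)] that(1) unfolding is_struct_def assms(2) by auto
  have cn_in: "cn A c \<in> h ` K" for c
    using assms unfolding is_struct_def by auto
  have "K \<noteq> {}"
    using assms unfolding is_struct_def by auto
  then show "is_struct \<tau> (pullback_struc h K A)"
    unfolding is_struct_def pullback_struc_def by (simp add: inv_into_into fn_in cn_in)
  show "strict_hom \<tau> h (pullback_struc h K A) A"
    unfolding strict_hom_def pullback_struc_def
    using assms(2) by (auto simp: f_inv_into_f fn_in cn_in)
qed

lemma list_all2_graph_iff:
  "list_all2 (\<lambda>a b. (a, b) \<in> (\<lambda>x. (x, h x)) ` X) as bs \<longleftrightarrow> set as \<subseteq> X \<and> bs = map h as"
  by (induction as arbitrary: bs) (auto simp: list_all2_Cons1)

lemma weak_iso_graph_strict_hom: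
  assumes B: "is_struct \<tau> B" and hom: "strict_hom \<tau> h B A" and onto: "h ` univ B = univ A"
  shows "weak_iso \<tau> ((\<lambda>b. (b, h b)) ` univ B) B A"
  unfolding weak_iso_def list_all2_graph_iff
proof (intro conjI allI impI)
  show "(\<lambda>b. (b, h b)) ` univ B \<subseteq> univ B \<times> univ A"
    using onto by auto
  show "Domain ((\<lambda>b. (b, h b)) ` univ B) = univ B"
    by force
  show "Range ((\<lambda>b. (b, h b)) ` univ B) = univ A"
    using onto by force
  show "rel B P as = rel A P bs"
    if "length as = rarity \<tau> P \<and> set as \<subseteq> univ B \<and> bs = map h as" for P as bs
    using hom that unfolding strict_hom_def by blast
  show "(fn B f as, fn A f bs) \<in> (\<lambda>b. (b, h b)) ` univ B"
    if "length as = farity \<tau> f \<and> set as \<subseteq> univ B \<and> bs = map h as" for f as bs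
  proof -
    have "fn B f as \<in> univ B"
      using B that unfolding is_struct_def by blast
    moreover have "h (fn B f as) = fn A f bs"
      using hom that unfolding strict_hom_def by blast
    ultimately show ?thesis
      by (simp add: image_iff)
  qed
  show "(cn B c, cn A c) \<in> (\<lambda>b. (b, h b)) ` univ B" for c
  proof -
    have "cn B c \<in> univ B" and "h (cn B c) = cn A c"
      using B hom unfolding is_struct_def strict_hom_def by blast+
    then show ?thesis
      by (simp add: image_iff)
  qed
qed

lemma is_model_if_weakly_iso:
  assumes "weak_iso_property \<tau> L sat" and "T \<subseteq> L"
    and "is_model \<tau> sat T A" and "is_struct \<tau> B" and "weakly_iso \<tau> B A"
  shows "is_model \<tau> sat T B"
proof -
  have "is_struct \<tau> A" and "\<forall>\<phi>\<in>T. sat A \<phi>"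
    using assms(3) unfolding is_model_def by auto
  then have "\<forall>\<phi>\<in>T. sat B \<phi>"
    using assms(1,2,4,5) unfolding weak_iso_property_def by blast
  with assms(4) show ?thesis
    unfolding is_model_def ..
qed

theorem lemma3:
  fixes \<tau> :: "('r, 'f) vocab"
    and L T :: "'s set"
    and sat :: "('u, 'r, 'f, 'c) struc \<Rightarrow> 's \<Rightarrow> bool"
    and A :: "('u, 'r, 'f, 'c) struc"
    and K :: "'u set"
  assumes "abstract_logic \<tau> L sat"
    and "weak_iso_property \<tau> L sat"
    and "T \<subseteq> L"
    and "is_model \<tau> sat T A"
    and "ordLess2 (card_of (univ A)) (card_of K)"
  shows "\<exists>B h. is_model \<tau> sat T B \<and> ordIso2 (card_of (univ B)) (card_of K) \<and>
           strict_hom \<tau> h B A \<and> h ` univ B = univ A \<and> weakly_iso \<tau> B A"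
proof -
  have A: "is_struct \<tau> A"
    using assms(4) by (simp add: is_model_def)
  then have "univ A \<noteq> {}"
    by (simp add: is_struct_def)
  then obtain h where h: "h ` K = univ A"
    using card_of_ordLeq2 ordLess_imp_ordLeq[OF assms(5)] by metis
  let ?B = "pullback_struc h K A"
  have B: "is_struct \<tau> ?B" and hom: "strict_hom \<tau> h ?B A"
    using A h by (rule is_struct_pullback_struc, rule strict_hom_pullback_struc)
  have iso: "weakly_iso \<tau> ?B A"
    unfolding weakly_iso_def using weak_iso_graph_strict_hom[OF B hom] h by auto
  have "is_model \<tau> sat T ?B"
    using assms(2,3,4) B iso by (rule is_model_if_weakly_iso)
  moreover have "ordIso2 (card_of (univ ?B)) (card_of K)"
    by (simp add: card_of_refl)
  moreover have "h ` univ ?B = univ A"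
    using h by simp
  ultimately show ?thesis
    using hom iso by blast
qed

end
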